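(* Let $\Omega$ be one of NS, PPTp, or NS$\cap$PPTp. Let $\mathcal{N}:\mathcal{L}(A')\to\mathcal{L}(B)$ be a quantum channel with Choi-Kraus operator space $K=K(\mathcal{N})$, and let $k>0$. Then $F^{\Omega}(\mathcal{N},k)=1$ if and only if $D^{\Omega}(K,k)=0$. Consequently the one-shot $\Omega$-codes assisted zero-error quantum capacity depends only on $K$: $$Q_0^{\Omega,(1)}(\mathcal{N})=Q_0^{\Omega,(1)}(K)=\left\lfloor \kappa^{\Omega}(K)\right\rfloor,\qquad \kappa^{\Omega}(K):=\max\{k\ge 0: D^{\Omega}(K,k)=0\}.$$
   Context: A quantum channel $\mathcal{N}(\rho)=\sum_j E_j\rho E_j^\dagger$ from $\mathcal{L}(A')$ to $\mathcal{L}(B)$ with $\sum_j E_j^\dagger E_j=\mathbb{1}_{A'}$; $A$ is a Hilbert space isomorphic to $A'$ with orthonormal basis $\{|i\rangle\}$. The Choi-Jamiołkowski matrix is $J_{AB}=\sum_{i,j}|i\rangle\langle j|_A\otimes \mathcal{N}(|i\rangle\langle j|_{A'})$. The Choi-Kraus operator space (non-commutative bipartite graph) is $K(\mathcal{N})=\mathrm{span}\{E_j\}$, and $P_{AB}$ denotes the projection onto the support of $J_{AB}$ (it is determined by $K$). $T_B$ denotes partial transpose on $B$. For $k>0$, $F^{\Omega}(\mathcal{N},k)$ is the optimal value of the SDP: maximize $\operatorname{tr}(J_{AB}W_{AB})$ over operators $W_{AB}$ on $A\otimes B$ and $\rho_A$ on $A$ subject to $0\le W_{AB}\le \rho_A\otimes\mathbb{1}_B$,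 $\operatorname{tr}\rho_A=1$, and additionally: if $\Omega$ includes PPTp, $-\frac{1}{k}\rho_A\otimes\mathbb{1}_B\le W_{AB}^{T_B}\le \frac{1}{k}\rho_A\otimes\mathbb{1}_B$; if $\Omega$ includes NS, $\operatorname{tr}_A W_{AB}=\frac{1}{k^2}\mathbb{1}_B$. The quantity $D^{\Omega}(K,k)$ is the optimal value of the SDP with the same variables and the same constraints but objective $\operatorname{tr} P_{AB}(W_{AB}-\rho_A\otimes\mathbb{1}_B)$ (to be maximized). Define $\kappa^{\Omega}(\mathcal{N})=\max\{k\ge0: F^{\Omega}(\mathcal{N},k)=1\}$, and the one-shot $\Omega$-codes assisted zero-error quantum capacity $Q_0^{\Omega,(1)}(\mathcal{N})=\lfloor\kappa^{\Omega}(\mathcal{N})\rfloor$; $Q_0^{\Omega,(1)}(K)$ denotes $\lfloor\kappa^{\Omega}(K)\rfloor$. *)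

theory Defs
  imports "HOL-Analysis.Analysis" "HOL-Library.Extended_Real" "Jordan_Normal_Form.Schur_Decomposition"
begin

text \<open>Operators on A (x) B are complex (dA*dB) x (dA*dB) matrices, the product basis vector
  |i> (x) |b> having index i*dB + b.\<close>

definition mtrace :: "complex mat \<Rightarrow> complex" where
  "mtrace M = (\<Sum>i<dim_row M. M $$ (i,i))"

definition hermitian_mat :: "nat \<Rightarrow> complex mat \<Rightarrow> bool" where
  "hermitian_mat n M \<longleftrightarrow> M \<in> carrier_mat n n \<and> mat_adjoint M = M"

definition psd :: "nat \<Rightarrow> complex mat \<Rightarrow> bool" where
  "psd n M \<longleftrightarrow> hermitian_mat n M \<and>
     (\<forall>v \<in> carrier_vec n. Im ((M *\<^sub>v v) \<bullet>c v) = 0 \<and> Re ((M *\<^sub>v v) \<bullet>c v) \<ge> 0)"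

definition loewner_le :: "nat \<Rightarrow> complex mat \<Rightarrow> complex mat \<Rightarrow> bool" where
  "loewner_le n M N \<longleftrightarrow> M \<in> carrier_mat n n \<and> N \<in> carrier_mat n n \<and> psd n (N - M)"

definition tensor_id_B :: "nat \<Rightarrow> nat \<Rightarrow> complex mat \<Rightarrow> complex mat" where
  "tensor_id_B dA dB \<rho> = mat (dA*dB) (dA*dB)
     (\<lambda>(r,c). if r mod dB = c mod dB then \<rho> $$ (r div dB, c div dB) else 0)"

definition partial_transpose_B :: "nat \<Rightarrow> nat \<Rightarrow> complex mat \<Rightarrow> complex mat" where
  "partial_transpose_B dA dB W = mat (dA*dB) (dA*dB)
     (\<lambda>(r,c). W $$ ((r div dB) * dB + c mod dB, (c div dB) * dB + r mod dB))"

definition partial_trace_A :: "nat \<Rightarrow> nat \<Rightarrow> complex mat \<Rightarrow> complex mat" where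
  "partial_trace_A dA dB W = mat dB dB (\<lambda>(b,b'). \<Sum>i<dA. W $$ (i*dB + b, i*dB + b'))"

definition channel_apply :: "nat \<Rightarrow> complex mat list \<Rightarrow> complex mat \<Rightarrow> complex mat" where
  "channel_apply dB Es \<rho> = foldr (\<lambda>E acc. E * \<rho> * mat_adjoint E + acc) Es (0\<^sub>m dB dB)"

definition is_kraus :: "nat \<Rightarrow> nat \<Rightarrow> complex mat list \<Rightarrow> bool" where
  "is_kraus dA dB Es \<longleftrightarrow> (\<forall>E \<in> set Es. E \<in> carrier_mat dB dA) \<and>
     foldr (\<lambda>E acc. mat_adjoint E * E + acc) Es (0\<^sub>m dA dA) = 1\<^sub>m dA"

definition mat_unit :: "nat \<Rightarrow> nat \<Rightarrow> nat \<Rightarrow> complex mat" where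
  "mat_unit d i j = mat d d (\<lambda>(x,y). if x = i \<and> y = j then 1 else 0)"

text \<open>Choi-Jamiolkowski matrix J_AB = sum_{i,j} |i><j| (x) N(|i><j|).\<close>
definition choi :: "nat \<Rightarrow> nat \<Rightarrow> complex mat list \<Rightarrow> complex mat" where
  "choi dA dB Es = mat (dA*dB) (dA*dB)
     (\<lambda>(r,c). channel_apply dB Es (mat_unit dA (r div dB) (c div dB)) $$ (r mod dB, c mod dB))"

definition kraus_space :: "nat \<Rightarrow> nat \<Rightarrow> complex mat list \<Rightarrow> complex mat set" where
  "kraus_space dA dB Es = {foldr (\<lambda>(c,E) acc. c \<cdot>\<^sub>m E + acc) (zip cs Es) (0\<^sub>m dB dA)
                          | cs. length cs = length Es}"

text \<open>Vectorisation E \<mapsto> sum_i |i> (x) E|i>; the support of J_AB is the span of these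
  vectors for E in K.\<close>
definition vecK :: "nat \<Rightarrow> nat \<Rightarrow> complex mat \<Rightarrow> complex vec" where
  "vecK dA dB E = vec (dA*dB) (\<lambda>r. E $$ (r mod dB, r div dB))"

definition is_proj_onto :: "nat \<Rightarrow> complex vec set \<Rightarrow> complex mat \<Rightarrow> bool" where
  "is_proj_onto n V P \<longleftrightarrow> hermitian_mat n P \<and> P * P = P \<and>
     {P *\<^sub>v v | v. v \<in> carrier_vec n} = V"

text \<open>P_AB: orthogonal projection onto the support of J_AB, expressed through K.\<close>
definition supp_proj_K :: "nat \<Rightarrow> nat \<Rightarrow> complex mat set \<Rightarrow> complex mat" where
  "supp_proj_K dA dB K = (SOME P. is_proj_onto (dA*dB) (vecK dA dB ` K) P)"

datatype Omega = NS | PPTp | NS_PPTp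

definition has_NS :: "Omega \<Rightarrow> bool" where
  "has_NS \<Omega> \<longleftrightarrow> \<Omega> = NS \<or> \<Omega> = NS_PPTp"

definition has_PPTp :: "Omega \<Rightarrow> bool" where
  "has_PPTp \<Omega> \<longleftrightarrow> \<Omega> = PPTp \<or> \<Omega> = NS_PPTp"

definition feasible :: "Omega \<Rightarrow> nat \<Rightarrow> nat \<Rightarrow> real \<Rightarrow> (complex mat \<times> complex mat) set" where
  "feasible \<Omega> dA dB k = {(W, \<rho>). W \<in> carrier_mat (dA*dB) (dA*dB) \<and> \<rho> \<in> carrier_mat dA dA \<and>
      psd (dA*dB) W \<and> loewner_le (dA*dB) W (tensor_id_B dA dB \<rho>) \<and> mtrace \<rho> = 1 \<and>
      (has_PPTp \<Omega> \<longrightarrow>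
         loewner_le (dA*dB) (- (complex_of_real (1/k) \<cdot>\<^sub>m tensor_id_B dA dB \<rho>))
                            (partial_transpose_B dA dB W) \<and>
         loewner_le (dA*dB) (partial_transpose_B dA dB W)
                            (complex_of_real (1/k) \<cdot>\<^sub>m tensor_id_B dA dB \<rho>)) \<and>
      (has_NS \<Omega> \<longrightarrow> partial_trace_A dA dB W = complex_of_real (1/k^2) \<cdot>\<^sub>m 1\<^sub>m dB)}"

text \<open>Optimal values (supremum, = maximum since the feasible set is compact;
  -\<infinity> if infeasible).\<close>
definition F_val :: "Omega \<Rightarrow> nat \<Rightarrow> nat \<Rightarrow> complex mat list \<Rightarrow> real \<Rightarrow> ereal" where
  "F_val \<Omega> dA dB Es k = (SUP p \<in> feasible \<Omega> dA dB k. ereal (Re (mtrace (choi dA dB Es * fst p))))"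

definition D_val :: "Omega \<Rightarrow> nat \<Rightarrow> nat \<Rightarrow> complex mat set \<Rightarrow> real \<Rightarrow> ereal" where
  "D_val \<Omega> dA dB K k = (SUP p \<in> feasible \<Omega> dA dB k.
      ereal (Re (mtrace (supp_proj_K dA dB K * (fst p - tensor_id_B dA dB (snd p))))))"

definition kappa_N :: "Omega \<Rightarrow> nat \<Rightarrow> nat \<Rightarrow> complex mat list \<Rightarrow> real" where
  "kappa_N \<Omega> dA dB Es = Sup {k. k > 0 \<and> F_val \<Omega> dA dB Es k = 1}"

definition kappa_K :: "Omega \<Rightarrow> nat \<Rightarrow> nat \<Rightarrow> complex mat set \<Rightarrow> real" where
  "kappa_K \<Omega> dA dB K = Sup {k. k > 0 \<and> D_val \<Omega> dA dB K k = 0}"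

definition Q0_N :: "Omega \<Rightarrow> nat \<Rightarrow> nat \<Rightarrow> complex mat list \<Rightarrow> int" where
  "Q0_N \<Omega> dA dB Es = \<lfloor>kappa_N \<Omega> dA dB Es\<rfloor>"

definition Q0_K :: "Omega \<Rightarrow> nat \<Rightarrow> nat \<Rightarrow> complex mat set \<Rightarrow> int" where
  "Q0_K \<Omega> dA dB K = \<lfloor>kappa_K \<Omega> dA dB K\<rfloor>"

end

theory Submission
  imports Defs
begin

text \<open>For a feasible pair \<open>(W, \<rho>)\<close> the Kraus condition gives \<open>tr J (\<rho> \<otimes> 1) = tr \<rho> = 1\<close>,
  so \<open>F = 1\<close> says that \<open>tr J (\<rho> \<otimes> 1 - W)\<close> gets arbitrarily small over the feasible set,
  while \<open>D = 0\<close> says the same of \<open>tr P (\<rho> \<otimes> 1 - W)\<close>. Both traces are sums of the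
  quadratic form of the positive semidefinite matrix \<open>\<rho> \<otimes> 1 - W\<close> over a family spanning
  the support of \<open>J\<close>: the vectorised Kraus operators, resp. the columns of \<open>P\<close>. Writing each
  family in terms of the other bounds either trace by a constant multiple of the other, with
  a constant independent of the feasible point. Hence the sets of \<open>k\<close> with \<open>F = 1\<close> and with
  \<open>D = 0\<close> coincide, and so do \<open>\<kappa>(N)\<close> and \<open>\<kappa>(K)\<close>.\<close>

lemma dim_mat_adjoint [simp]:
  "dim_row (mat_adjoint A) = dim_col A" "dim_col (mat_adjoint A) = dim_row A"
  unfolding mat_adjoint_def by auto

lemma mat_adjoint_carrier: "E \<in> carrier_mat m n \<Longrightarrow> mat_adjoint E \<in> carrier_mat n m"
  by (metis dim_mat_adjoint carrier_matD carrier_matI)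

lemma index_mat_adjoint [simp]:
  "i < dim_col A \<Longrightarrow> j < dim_row A \<Longrightarrow> mat_adjoint A $$ (i,j) = cnj (A $$ (j,i))"
  unfolding mat_adjoint_def by (auto simp: mat_of_rows_index cols_def)

lemma hermitian_mat_carrier: "hermitian_mat n P \<Longrightarrow> P \<in> carrier_mat n n"
  unfolding hermitian_mat_def by simp

lemma hermitian_mat_index:
  "hermitian_mat n P \<Longrightarrow> i < n \<Longrightarrow> j < n \<Longrightarrow> cnj (P $$ (j,i)) = P $$ (i,j)"
  unfolding hermitian_mat_def by (metis index_mat_adjoint carrier_matD(1,2))

lemma psd_carrier: "psd n X \<Longrightarrow> X \<in> carrier_mat n n"
  unfolding psd_def hermitian_mat_def by simp

lemma index_mult_mat_sum:
  assumes "A \<in> carrier_mat m k" "B \<in> carrier_mat k n" "i < m" "j < n"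
  shows "(A * B) $$ (i,j) = (\<Sum>x<k. A $$ (i,x) * B $$ (x,j))"
  using assms by (simp add: scalar_prod_def atLeast0LessThan)

lemma index_mult_mat_vec_sum:
  "P \<in> carrier_mat n n \<Longrightarrow> x \<in> carrier_vec n \<Longrightarrow> r < n \<Longrightarrow>
   (P *\<^sub>v x) $ r = (\<Sum>k<n. P $$ (r,k) * x $ k)"
  by (auto simp: scalar_prod_def atLeast0LessThan)

lemma cscalar_prod_sum:
  "v \<in> carrier_vec n \<Longrightarrow> w \<in> carrier_vec n \<Longrightarrow> v \<bullet>c w = (\<Sum>i<n. v $ i * cnj (w $ i))"
  by (auto simp: scalar_prod_def atLeast0LessThan)

lemma mtrace_mult:
  "A \<in> carrier_mat n n \<Longrightarrow> B \<in> carrier_mat n n \<Longrightarrow>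
   mtrace (A * B) = (\<Sum>i<n. \<Sum>k<n. A $$ (i,k) * B $$ (k,i))"
  unfolding mtrace_def by (auto simp: scalar_prod_def atLeast0LessThan intro!: sum.cong)

lemma mtrace_minus:
  "A \<in> carrier_mat n n \<Longrightarrow> B \<in> carrier_mat n n \<Longrightarrow> mtrace (A - B) = mtrace A - mtrace B"
  unfolding mtrace_def by (simp add: sum_subtractf)

lemma mtrace_mult_minus:
  assumes "P \<in> carrier_mat n n" "A \<in> carrier_mat n n" "B \<in> carrier_mat n n"
  shows "mtrace (P * (A - B)) = mtrace (P * A) - mtrace (P * B)"
  unfolding mult_minus_distrib_mat[OF assms] by (rule mtrace_minus) (use assms in auto)

lemma hermitian_cscalar_prod_swap:
  assumes H: "hermitian_mat n P" and z: "z \<in> carrier_vec n" and w: "w \<in> carrier_vec n"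
  shows "(P *\<^sub>v z) \<bullet>c w = z \<bullet>c (P *\<^sub>v w)"
proof -
  have P: "P \<in> carrier_mat n n" by (rule hermitian_mat_carrier[OF H])
  have Pz: "P *\<^sub>v z \<in> carrier_vec n" and Pw: "P *\<^sub>v w \<in> carrier_vec n" using P z w by auto
  have "(P *\<^sub>v z) \<bullet>c w = (\<Sum>i<n. (\<Sum>k<n. P $$ (i,k) * z $ k) * cnj (w $ i))"
    unfolding cscalar_prod_sum[OF Pz w] using P z
    by (simp add: index_mult_mat_vec_sum del: index_mult_mat_vec)
  also have "\<dots> = (\<Sum>k<n. \<Sum>i<n. z $ k * cnj (P $$ (k,i) * w $ i))"
    by (subst sum.swap)
      (simp add: sum_distrib_left sum_distrib_right hermitian_mat_index[OF H] mult_ac)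
  also have "\<dots> = z \<bullet>c (P *\<^sub>v w)"
    unfolding cscalar_prod_sum[OF z Pw] using P w
    by (simp add: index_mult_mat_vec_sum sum_distrib_left del: index_mult_mat_vec)
  finally show ?thesis .
qed

lemma sum_lessThan_mult_split:
  fixes f :: "nat \<Rightarrow> 'a::comm_monoid_add"
  shows "(\<Sum>r<a*b. f r) = (\<Sum>i<a. \<Sum>j<b. f (i*b + j))"
proof -
  have "(\<Sum>j<b. f (i*b + j)) = sum f {i*b..<i*b + b}" for i
    using sum.atLeastLessThan_shift_0[of f "i*b" "i*b + b"] by (simp add: atLeast0LessThan comp_def)
  moreover have "(\<Sum>i<a. sum f {i*b..<i*b + b}) = sum f {..<a*b}" by (rule sum.nat_group)
  ultimately show ?thesis by simp
qed

lemma sum_sum_list_swap: "(\<Sum>i\<in>A. \<Sum>x\<leftarrow>xs. f i x) = (\<Sum>x\<leftarrow>xs. \<Sum>i\<in>A. f i x)"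
  by (induction xs) (auto simp: sum.distrib)

lemma Re_sum_list: "Re (\<Sum>x\<leftarrow>xs. f x) = (\<Sum>x\<leftarrow>xs. Re (f x))"
  by (induction xs) auto

lemma sum_list_upt_eq_sum_lessThan: "(\<Sum>k\<leftarrow>[0..<n]. g k) = (\<Sum>k<n. g k)"
  by (simp add: sum_set_upt_conv_sum_list_nat[symmetric] atLeast0LessThan)

lemma foldr_add_mat:
  assumes "\<forall>x\<in>set xs. F x \<in> carrier_mat m n"
  shows "foldr (\<lambda>x acc. F x + acc) xs (0\<^sub>m m n) \<in> carrier_mat m n"
    and "i < m \<Longrightarrow> j < n \<Longrightarrow> foldr (\<lambda>x acc. F x + acc) xs (0\<^sub>m m n) $$ (i,j) = (\<Sum>x\<leftarrow>xs. F x $$ (i,j))"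
  using assms by (induction xs) auto

section \<open>Orthogonal projections onto finitely generated subspaces\<close>

lemma is_proj_onto_fixes: "is_proj_onto n S P \<Longrightarrow> x \<in> S \<Longrightarrow> P *\<^sub>v x = x"
  unfolding is_proj_onto_def hermitian_mat_def by (auto simp: assoc_mult_mat_vec[symmetric])

lemma is_proj_onto_zero: "is_proj_onto n {0\<^sub>v n} (0\<^sub>m n n)"
proof -
  have "{0\<^sub>m n n *\<^sub>v v | v. v \<in> carrier_vec n} = {0\<^sub>v n}"
    using zero_carrier_vec[of n] by (auto intro!: exI[of _ "0\<^sub>v n"])
  thus ?thesis unfolding is_proj_onto_def hermitian_mat_def by (auto intro!: eq_matI)
qed

text \<open>Gram-Schmidt step: adding to \<open>P\<close> the rank-one projection onto the component
  \<open>w = v - P v\<close> of \<open>v\<close> orthogonal to \<open>S\<close>. Normalising by \<open>t = inverse (w \<bullet>c w)\<close> also covers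
  \<open>v \<in> S\<close>: then \<open>w = 0\<close> and \<open>t = 0\<close>, so no case split is needed.\<close>
locale proj_extension =
  fixes n :: nat and S :: "complex vec set" and P :: "complex mat" and v :: "complex vec"
  assumes proj: "is_proj_onto n S P" and v: "v \<in> carrier_vec n"
begin

definition w :: "complex vec" where "w = v - P *\<^sub>v v"
definition t :: complex where "t = inverse (w \<bullet>c w)"
definition P' :: "complex mat" where "P' = P + mat n n (\<lambda>(r,c). w $ r * cnj (w $ c) * t)"

lemma herm: "hermitian_mat n P" and idem: "P * P = P"
  and S_eq: "S = {P *\<^sub>v x | x. x \<in> carrier_vec n}"
  using proj unfolding is_proj_onto_def by auto

lemma P: "P \<in> carrier_mat n n"
  by (rule hermitian_mat_carrier[OF herm])

lemma w: "w \<in> carrier_vec n"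
  using v P unfolding w_def by auto

lemma P_P_vec: "x \<in> carrier_vec n \<Longrightarrow> P *\<^sub>v (P *\<^sub>v x) = P *\<^sub>v x"
  using P idem by (metis assoc_mult_mat_vec)

lemma P_w: "P *\<^sub>v w = 0\<^sub>v n"
  using P v P_P_vec[OF v] unfolding w_def by (simp add: mult_minus_distrib_mat_vec)

lemma range_orthogonal_w: "z \<in> carrier_vec n \<Longrightarrow> (P *\<^sub>v z) \<bullet>c w = 0"
  using hermitian_cscalar_prod_swap[OF herm _ w] P_w by simp

lemma cnj_t: "cnj t = t"
  unfolding t_def using w by (simp add: cscalar_prod_sum mult.commute)

lemma t_normalises: "(t * (w \<bullet>c w)) \<cdot>\<^sub>v w = w"
  using w by (cases "w \<bullet>c w = 0") (auto simp: t_def)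

lemma P'_carrier: "P' \<in> carrier_mat n n"
  unfolding P'_def using P by auto

lemma P'_index: "r < n \<Longrightarrow> c < n \<Longrightarrow> P' $$ (r,c) = P $$ (r,c) + w $ r * cnj (w $ c) * t"
  unfolding P'_def using P by auto

lemma P'_hermitian: "hermitian_mat n P'"
  unfolding hermitian_mat_def
proof
  show "mat_adjoint P' = P'"
    using P'_carrier
    by (intro eq_matI) (auto simp: P'_index hermitian_mat_index[OF herm] cnj_t mult.commute)
qed (rule P'_carrier)

lemma P'_idem: "P' * P' = P'"
proof (rule eq_matI)
  fix r c assume "r < dim_row P'" "c < dim_col P'"
  hence rc: "r < n" "c < n" using P'_carrier by auto
  have Pw: "(\<Sum>k<n. P $$ (r,k) * w $ k) = 0" if "r < n" for r
    using P_w index_mult_mat_vec_sum[OF P w that] that by simp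
  have wP: "(\<Sum>k<n. cnj (w $ k) * P $$ (k,c)) = 0"
    using arg_cong[OF Pw[OF rc(2)], of cnj]
    by (simp add: hermitian_mat_index[OF herm _ rc(2)] mult.commute)
  have PP: "(\<Sum>k<n. P $$ (r,k) * P $$ (k,c)) = P $$ (r,c)"
    using idem index_mult_mat_sum[OF P P rc] by simp
  have ww: "(\<Sum>k<n. cnj (w $ k) * w $ k) * t * t = t"
    using w by (cases "w \<bullet>c w = 0") (auto simp: t_def cscalar_prod_sum mult.commute)
  have "(P' * P') $$ (r,c) = (\<Sum>k<n. P $$ (r,k) * P $$ (k,c)
      + (P $$ (r,k) * w $ k) * (cnj (w $ c) * t) + (w $ r * t) * (cnj (w $ k) * P $$ (k,c))
      + (w $ r * cnj (w $ c)) * (cnj (w $ k) * w $ k * t * t))"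
    using rc by (simp add: index_mult_mat_sum[OF P'_carrier P'_carrier] P'_index algebra_simps)
  also have "\<dots> = P $$ (r,c) + w $ r * cnj (w $ c) * t"
    using Pw[OF rc(1)] wP PP ww
    by (simp add: sum.distrib flip: sum_distrib_left sum_distrib_right)
  finally show "(P' * P') $$ (r,c) = P' $$ (r,c)" using rc by (simp add: P'_index)
qed (use P'_carrier in auto)

lemma P'_apply:
  assumes x: "x \<in> carrier_vec n"
  shows "P' *\<^sub>v x = P *\<^sub>v x + (t * (x \<bullet>c w)) \<cdot>\<^sub>v w"
proof (rule eq_vecI)
  fix r assume "r < dim_vec (P *\<^sub>v x + (t * (x \<bullet>c w)) \<cdot>\<^sub>v w)"
  hence r: "r < n" using P w by auto
  have "(P' *\<^sub>v x) $ r = (\<Sum>k<n. P $$ (r,k) * x $ k + (x $ k * cnj (w $ k)) * (t * w $ r))"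
    unfolding index_mult_mat_vec_sum[OF P'_carrier x r] using r
    by (intro sum.cong refl) (simp add: P'_index algebra_simps)
  also have "\<dots> = (P *\<^sub>v x) $ r + (t * (x \<bullet>c w)) * w $ r"
    unfolding index_mult_mat_vec_sum[OF P x r] cscalar_prod_sum[OF x w]
    by (simp add: sum.distrib sum_distrib_left mult_ac)
  finally show "(P' *\<^sub>v x) $ r = (P *\<^sub>v x + (t * (x \<bullet>c w)) \<cdot>\<^sub>v w) $ r"
    using r w P by simp
qed (use P P'_carrier w in auto)

lemma P'_range: "{P' *\<^sub>v x | x. x \<in> carrier_vec n} = {c \<cdot>\<^sub>v v + y | c y. y \<in> S}"
proof (intro equalityI subsetI)
  fix y assume "y \<in> {P' *\<^sub>v x | x. x \<in> carrier_vec n}"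
  then obtain x where x: "x \<in> carrier_vec n" and y: "y = P' *\<^sub>v x" by auto
  define a where "a = t * (x \<bullet>c w)"
  have Pxv: "P *\<^sub>v (x - a \<cdot>\<^sub>v v) = P *\<^sub>v x - a \<cdot>\<^sub>v (P *\<^sub>v v)"
    using P x v by (simp add: mult_minus_distrib_mat_vec mult_mat_vec)
  have "y = a \<cdot>\<^sub>v v + P *\<^sub>v (x - a \<cdot>\<^sub>v v)"
    unfolding y P'_apply[OF x] a_def[symmetric] Pxv unfolding w_def using P v x
    by (intro eq_vecI) (auto simp: right_diff_distrib)
  moreover have "P *\<^sub>v (x - a \<cdot>\<^sub>v v) \<in> S" unfolding S_eq using x v by auto
  ultimately show "y \<in> {c \<cdot>\<^sub>v v + y | c y. y \<in> S}" by blast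
next
  fix y assume "y \<in> {c \<cdot>\<^sub>v v + y | c y. y \<in> S}"
  then obtain c z where y: "y = c \<cdot>\<^sub>v v + P *\<^sub>v z" and z: "z \<in> carrier_vec n"
    unfolding S_eq by auto
  have y_carrier: "y \<in> carrier_vec n" using y z v P by auto
  have v_split: "v = w + P *\<^sub>v v" unfolding w_def using v P by auto
  have "v \<bullet>c w = w \<bullet>c w"
    using w v P range_orthogonal_w[OF v] by (subst v_split) (simp add: add_scalar_prod_distrib[of _ n])
  hence yw: "y \<bullet>c w = c * (w \<bullet>c w)"
    unfolding y using v z w P range_orthogonal_w[OF z] by (simp add: add_scalar_prod_distrib[of _ n])
  have Py: "P *\<^sub>v y = c \<cdot>\<^sub>v (P *\<^sub>v v) + P *\<^sub>v z"
    unfolding y using P v z P_P_vec[OF z] by (simp add: mult_add_distrib_mat_vec mult_mat_vec)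
  have "(t * (y \<bullet>c w)) \<cdot>\<^sub>v w = c \<cdot>\<^sub>v ((t * (w \<bullet>c w)) \<cdot>\<^sub>v w)"
    unfolding yw by (simp add: smult_smult_assoc mult_ac)
  hence "P' *\<^sub>v y = c \<cdot>\<^sub>v (P *\<^sub>v v) + P *\<^sub>v z + c \<cdot>\<^sub>v w"
    unfolding P'_apply[OF y_carrier] Py t_normalises by simp
  also have "\<dots> = y"
    unfolding y w_def using P v z by (intro eq_vecI) (auto simp: right_diff_distrib)
  finally show "y \<in> {P' *\<^sub>v x | x. x \<in> carrier_vec n}" using y_carrier by (metis (mono_tags) mem_Collect_eq)
qed

lemma is_proj_onto_P': "is_proj_onto n {c \<cdot>\<^sub>v v + y | c y. y \<in> S} P'"
  unfolding is_proj_onto_def using P'_hermitian P'_idem P'_range by blast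

end

lemma is_proj_onto_extend:
  "is_proj_onto n S P \<Longrightarrow> v \<in> carrier_vec n \<Longrightarrow> \<exists>P'. is_proj_onto n {c \<cdot>\<^sub>v v + y | c y. y \<in> S} P'"
  using proj_extension.is_proj_onto_P' proj_extension.intro by blast

lemma kraus_space_Nil: "kraus_space dA dB [] = {0\<^sub>m dB dA}"
  unfolding kraus_space_def by auto

lemma kraus_space_Cons:
  "kraus_space dA dB (F # Es) = {c \<cdot>\<^sub>m F + M | c M. M \<in> kraus_space dA dB Es}"
proof (intro equalityI subsetI)
  fix x assume "x \<in> kraus_space dA dB (F # Es)"
  then obtain cs where "length cs = Suc (length Es)"
    "x = foldr (\<lambda>(c,E) acc. c \<cdot>\<^sub>m E + acc) (zip cs (F # Es)) (0\<^sub>m dB dA)"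
    unfolding kraus_space_def by auto
  then obtain c cs' where "length cs' = length Es"
    "x = c \<cdot>\<^sub>m F + foldr (\<lambda>(c,E) acc. c \<cdot>\<^sub>m E + acc) (zip cs' Es) (0\<^sub>m dB dA)"
    by (cases cs) auto
  thus "x \<in> {c \<cdot>\<^sub>m F + M | c M. M \<in> kraus_space dA dB Es}"
    unfolding kraus_space_def by blast
next
  fix x assume "x \<in> {c \<cdot>\<^sub>m F + M | c M. M \<in> kraus_space dA dB Es}"
  then obtain c cs where "length cs = length Es"
    "x = c \<cdot>\<^sub>m F + foldr (\<lambda>(c,E) acc. c \<cdot>\<^sub>m E + acc) (zip cs Es) (0\<^sub>m dB dA)"
    unfolding kraus_space_def by auto
  thus "x \<in> kraus_space dA dB (F # Es)"
    unfolding kraus_space_def by (auto intro!: exI[of _ "c # cs"])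
qed

lemma kraus_space_carrier:
  "\<forall>E\<in>set Es. E \<in> carrier_mat dB dA \<Longrightarrow> M \<in> kraus_space dA dB Es \<Longrightarrow> M \<in> carrier_mat dB dA"
  by (induction Es arbitrary: M) (auto simp: kraus_space_Nil kraus_space_Cons)

lemma zero_mem_kraus_space:
  "\<forall>E\<in>set Es. E \<in> carrier_mat dB dA \<Longrightarrow> 0\<^sub>m dB dA \<in> kraus_space dA dB Es"
proof (induction Es)
  case (Cons F Es)
  hence "0\<^sub>m dB dA = 0 \<cdot>\<^sub>m F + 0\<^sub>m dB dA" and "0\<^sub>m dB dA \<in> kraus_space dA dB Es"
    by (auto intro!: eq_matI)
  thus ?case unfolding kraus_space_Cons by blast
qed (simp add: kraus_space_Nil)

lemma kraus_op_mem_kraus_space: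
  "\<forall>E\<in>set Es. E \<in> carrier_mat dB dA \<Longrightarrow> E \<in> set Es \<Longrightarrow> E \<in> kraus_space dA dB Es"
proof (induction Es)
  case (Cons F Es)
  show ?case
  proof (cases "E = F")
    case True
    hence "E = 1 \<cdot>\<^sub>m F + 0\<^sub>m dB dA" using Cons.prems by (auto intro!: eq_matI)
    moreover have "0\<^sub>m dB dA \<in> kraus_space dA dB Es"
      using zero_mem_kraus_space Cons.prems by simp
    ultimately show ?thesis unfolding kraus_space_Cons by blast
  next
    case False
    hence "E \<in> kraus_space dA dB Es" using Cons by auto
    moreover have "E = 0 \<cdot>\<^sub>m F + E" using Cons.prems by (auto intro!: eq_matI)
    ultimately show ?thesis unfolding kraus_space_Cons by blast
  qed
qed simp

lemma index_lt_mult_div [simp]: "(r::nat) < dA * dB \<Longrightarrow> r div dB < dA"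
  by (rule less_mult_imp_div_less)

lemma index_lt_mult_mod [simp]: "(r::nat) < dA * dB \<Longrightarrow> r mod dB < dB"
  by (cases "dB = 0") auto

lemma dim_vecK [simp]: "dim_vec (vecK dA dB E) = dA*dB"
  unfolding vecK_def by simp

lemma vecK_carrier [simp]: "vecK dA dB E \<in> carrier_vec (dA*dB)"
  unfolding vecK_def by auto

lemma index_vecK: "r < dA*dB \<Longrightarrow> vecK dA dB E $ r = E $$ (r mod dB, r div dB)"
  unfolding vecK_def by auto

lemma vecK_lincomb:
  "E \<in> carrier_mat dB dA \<Longrightarrow> M \<in> carrier_mat dB dA \<Longrightarrow>
   vecK dA dB (c \<cdot>\<^sub>m E + M) = c \<cdot>\<^sub>v vecK dA dB E + vecK dA dB M"
  by (rule eq_vecI) (auto simp: index_vecK)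

lemma vecK_zero: "vecK dA dB (0\<^sub>m dB dA) = 0\<^sub>v (dA*dB)"
  by (rule eq_vecI) (auto simp: index_vecK)

lemma vecK_image_kraus_space_Cons:
  assumes "\<forall>E\<in>set (F # Es). E \<in> carrier_mat dB dA"
  shows "vecK dA dB ` kraus_space dA dB (F # Es) =
    {c \<cdot>\<^sub>v vecK dA dB F + y | c y. y \<in> vecK dA dB ` kraus_space dA dB Es}"
proof -
  have lin: "vecK dA dB (c \<cdot>\<^sub>m F + M) = c \<cdot>\<^sub>v vecK dA dB F + vecK dA dB M"
    if "M \<in> kraus_space dA dB Es" for c M
    using vecK_lincomb kraus_space_carrier[of Es dB dA M] that assms by auto
  show ?thesis unfolding kraus_space_Cons
  proof (intro equalityI subsetI)
    fix x assume "x \<in> vecK dA dB ` {c \<cdot>\<^sub>m F + M | c M. M \<in> kraus_space dA dB Es}"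
    then obtain c M where "x = vecK dA dB (c \<cdot>\<^sub>m F + M)" "M \<in> kraus_space dA dB Es" by blast
    thus "x \<in> {c \<cdot>\<^sub>v vecK dA dB F + y | c y. y \<in> vecK dA dB ` kraus_space dA dB Es}"
      using lin by blast
  next
    fix x assume "x \<in> {c \<cdot>\<^sub>v vecK dA dB F + y | c y. y \<in> vecK dA dB ` kraus_space dA dB Es}"
    then obtain c M where "x = c \<cdot>\<^sub>v vecK dA dB F + vecK dA dB M" "M \<in> kraus_space dA dB Es" by blast
    thus "x \<in> vecK dA dB ` {c \<cdot>\<^sub>m F + M | c M. M \<in> kraus_space dA dB Es}"
      using lin by (metis (mono_tags, lifting) image_eqI mem_Collect_eq)
  qed
qed

lemma supp_proj_K_is_proj_onto:
  assumes "\<forall>E\<in>set Es. E \<in> carrier_mat dB dA"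
  shows "is_proj_onto (dA*dB) (vecK dA dB ` kraus_space dA dB Es) (supp_proj_K dA dB (kraus_space dA dB Es))"
proof -
  have "\<exists>P. is_proj_onto (dA*dB) (vecK dA dB ` kraus_space dA dB Es) P"
    using assms
  proof (induction Es)
    case Nil
    show ?case using is_proj_onto_zero by (auto simp: kraus_space_Nil vecK_zero)
  next
    case (Cons F Es)
    then obtain P where "is_proj_onto (dA*dB) (vecK dA dB ` kraus_space dA dB Es) P" by auto
    from is_proj_onto_extend[OF this vecK_carrier] show ?case
      unfolding vecK_image_kraus_space_Cons[OF Cons.prems] .
  qed
  thus ?thesis unfolding supp_proj_K_def by (rule someI_ex)
qed

section \<open>Quadratic forms of positive semidefinite matrices\<close>

definition qform :: "nat \<Rightarrow> complex mat \<Rightarrow> (nat \<Rightarrow> complex) \<Rightarrow> complex" where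
  "qform n X f = (\<Sum>r<n. \<Sum>c<n. cnj (f r) * X $$ (r,c) * f c)"

fun lin_comb :: "complex list \<Rightarrow> (nat \<Rightarrow> complex) list \<Rightarrow> nat \<Rightarrow> complex" where
  "lin_comb (c # cs) (u # us) = (\<lambda>i. c * u i + lin_comb cs us i)"
| "lin_comb _ _ = (\<lambda>i. 0)"

lemma lin_comb_map: "lin_comb (map a xs) (map u xs) i = (\<Sum>x\<leftarrow>xs. a x * u x i)"
  by (induction xs) auto

lemma qform_nonneg: assumes "psd n X" shows "0 \<le> Re (qform n X f)"
proof -
  have "(X *\<^sub>v vec n f) \<bullet>c vec n f = qform n X f"
    using psd_carrier[OF assms] unfolding qform_def
    by (auto simp: scalar_prod_def atLeast0LessThan sum_distrib_left mult_ac intro!: sum.cong)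
  moreover have "0 \<le> Re ((X *\<^sub>v vec n f) \<bullet>c vec n f)" using assms unfolding psd_def by auto
  ultimately show ?thesis by simp
qed

lemma qform_cong: "(\<And>r. r < n \<Longrightarrow> f r = g r) \<Longrightarrow> qform n X f = qform n X g"
  unfolding qform_def by simp

lemma qform_parallelogram:
  "qform n X (\<lambda>i. a i + b i) + qform n X (\<lambda>i. a i - b i) = 2 * qform n X a + 2 * qform n X b"
proof -
  have "qform n X (\<lambda>i. a i + b i) + qform n X (\<lambda>i. a i - b i) =
     (\<Sum>r<n. \<Sum>c<n. cnj (a r + b r) * X $$ (r,c) * (a c + b c) + cnj (a r - b r) * X $$ (r,c) * (a c - b c))"
    unfolding qform_def by (simp add: sum.distrib)
  also have "\<dots> = (\<Sum>r<n. \<Sum>c<n. 2 * (cnj (a r) * X $$ (r,c) * a c) + 2 * (cnj (b r) * X $$ (r,c) * b c))"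
    by (intro sum.cong refl) (simp add: algebra_simps)
  also have "\<dots> = 2 * qform n X a + 2 * qform n X b"
    unfolding qform_def by (simp add: sum.distrib sum_distrib_left)
  finally show ?thesis .
qed

lemma qform_add_le:
  assumes "psd n X"
  shows "Re (qform n X (\<lambda>i. a i + b i)) \<le> 2 * Re (qform n X a) + 2 * Re (qform n X b)"
  using arg_cong[OF qform_parallelogram, of Re n X a b] qform_nonneg[OF assms, of "\<lambda>i. a i - b i"]
  by simp

lemma qform_scale: "Re (qform n X (\<lambda>i. c * a i)) = (cmod c)\<^sup>2 * Re (qform n X a)"
proof -
  have "qform n X (\<lambda>i. c * a i) = (cnj c * c) * qform n X a"
    unfolding qform_def by (simp add: sum_distrib_left mult_ac)
  moreover have "cnj c * c = complex_of_real ((cmod c)\<^sup>2)"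
    by (metis complex_norm_square mult.commute)
  ultimately show ?thesis by simp
qed

lemma qform_lin_comb_le:
  "\<exists>C\<ge>0. \<forall>X. psd n X \<longrightarrow> Re (qform n X (lin_comb cs us)) \<le> C * (\<Sum>u\<leftarrow>us. Re (qform n X u))"
proof (induction cs us rule: lin_comb.induct)
  case (1 c cs u us)
  then obtain C where C: "C \<ge> 0"
    "\<forall>X. psd n X \<longrightarrow> Re (qform n X (lin_comb cs us)) \<le> C * (\<Sum>u\<leftarrow>us. Re (qform n X u))"
    by auto
  define D where "D = 2 * (cmod c)\<^sup>2 + 2 * C"
  have "Re (qform n X (lin_comb (c # cs) (u # us))) \<le> D * (\<Sum>u\<leftarrow>u # us. Re (qform n X u))"
    if X: "psd n X" for X
  proof -
    have s0: "0 \<le> (\<Sum>u\<leftarrow>us. Re (qform n X u))"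
      by (rule sum_list_nonneg) (auto simp: qform_nonneg[OF X])
    have q0: "0 \<le> Re (qform n X u)" by (rule qform_nonneg[OF X])
    have "Re (qform n X (lin_comb (c # cs) (u # us)))
        \<le> 2 * Re (qform n X (\<lambda>i. c * u i)) + 2 * Re (qform n X (lin_comb cs us))"
      using qform_add_le[OF X, of "\<lambda>i. c * u i" "lin_comb cs us"] by simp
    also have "\<dots> \<le> 2 * (cmod c)\<^sup>2 * Re (qform n X u) + 2 * C * (\<Sum>u\<leftarrow>us. Re (qform n X u))"
      using C X by (simp add: qform_scale)
    also have "\<dots> \<le> D * (Re (qform n X u) + (\<Sum>u\<leftarrow>us. Re (qform n X u)))"
      unfolding D_def using s0 q0 C by (simp add: algebra_simps mult_right_mono)
    finally show ?thesis by simp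
  qed
  moreover have "D \<ge> 0" unfolding D_def using C by simp
  ultimately show ?case by blast
qed (auto simp: qform_def)

lemma sum_qform_le_if_lin_combs:
  assumes "\<forall>u\<in>set us. \<exists>cs. \<forall>r<n. u r = lin_comb cs ws r"
  shows "\<exists>C\<ge>0. \<forall>X. psd n X \<longrightarrow>
    (\<Sum>u\<leftarrow>us. Re (qform n X u)) \<le> C * (\<Sum>w\<leftarrow>ws. Re (qform n X w))"
  using assms
proof (induction us)
  case Nil
  show ?case by auto
next
  case (Cons u us)
  then obtain C where C: "C \<ge> 0" "\<forall>X. psd n X \<longrightarrow>
      (\<Sum>u\<leftarrow>us. Re (qform n X u)) \<le> C * (\<Sum>w\<leftarrow>ws. Re (qform n X w))" by auto
  obtain cs where "\<forall>r<n. u r = lin_comb cs ws r" using Cons.prems by auto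
  hence "qform n X u = qform n X (lin_comb cs ws)" for X by (intro qform_cong) simp
  then obtain Cu where Cu: "Cu \<ge> 0"
    "\<forall>X. psd n X \<longrightarrow> Re (qform n X u) \<le> Cu * (\<Sum>w\<leftarrow>ws. Re (qform n X w))"
    using qform_lin_comb_le[of n cs ws] by auto
  have "(\<Sum>u\<leftarrow>u # us. Re (qform n X u)) \<le> (Cu + C) * (\<Sum>w\<leftarrow>ws. Re (qform n X w))"
    if "psd n X" for X
    using C(2) Cu(2) that by (simp add: distrib_right add_mono)
  thus ?case using C Cu by (intro exI[of _ "Cu + C"]) simp
qed

section \<open>The SDP objectives as sums of quadratic forms\<close>

definition kraus_vecs :: "nat \<Rightarrow> nat \<Rightarrow> complex mat list \<Rightarrow> (nat \<Rightarrow> complex) list" where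
  "kraus_vecs dA dB Es = map (\<lambda>E. ($) (vecK dA dB E)) Es"

definition proj_cols :: "nat \<Rightarrow> complex mat \<Rightarrow> (nat \<Rightarrow> complex) list" where
  "proj_cols n P = map (\<lambda>k a. P $$ (a,k)) [0..<n]"

lemma index_mat_unit:
  "y < d \<Longrightarrow> x < d \<Longrightarrow> mat_unit d i j $$ (y,x) = (if y = i \<and> x = j then 1 else 0)"
  unfolding mat_unit_def by simp

lemma mat_unit_carrier: "mat_unit d i j \<in> carrier_mat d d"
  unfolding mat_unit_def by simp

lemma index_conj_mat_unit:
  assumes E: "E \<in> carrier_mat dB dA" and i: "i < dA" and j: "j < dA" and "b < dB" "b' < dB"
  shows "(E * mat_unit dA i j * mat_adjoint E) $$ (b,b') = E $$ (b,i) * cnj (E $$ (b',j))"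
proof -
  have EU: "(E * mat_unit dA i j) $$ (b,x) = (if x = j then E $$ (b,i) else 0)" if "x < dA" for x
  proof -
    have "(E * mat_unit dA i j) $$ (b,x) = (\<Sum>y<dA. E $$ (b,y) * mat_unit dA i j $$ (y,x))"
      using assms that by (intro index_mult_mat_sum[OF E mat_unit_carrier])
    also have "\<dots> = (\<Sum>y<dA. if y = i then (if x = j then E $$ (b,i) else 0) else 0)"
      using that by (intro sum.cong refl) (simp add: index_mat_unit)
    finally show ?thesis using i by simp
  qed
  have "(E * mat_unit dA i j * mat_adjoint E) $$ (b,b') =
      (\<Sum>x<dA. (E * mat_unit dA i j) $$ (b,x) * mat_adjoint E $$ (x,b'))"
    using assms mat_unit_carrier by (intro index_mult_mat_sum mult_carrier_mat mat_adjoint_carrier)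
  also have "\<dots> = (\<Sum>x<dA. if x = j then E $$ (b,i) * cnj (E $$ (b',j)) else 0)"
    using assms by (intro sum.cong refl) (simp add: EU)
  finally show ?thesis using j by simp
qed

lemma index_choi:
  assumes K: "\<forall>E\<in>set Es. E \<in> carrier_mat dB dA" and r: "r < dA*dB" and c: "c < dA*dB"
  shows "choi dA dB Es $$ (r,c) = (\<Sum>E\<leftarrow>Es. vecK dA dB E $ r * cnj (vecK dA dB E $ c))"
proof -
  let ?U = "mat_unit dA (r div dB) (c div dB)"
  have "\<forall>E\<in>set Es. E * ?U * mat_adjoint E \<in> carrier_mat dB dB"
    using K by (auto intro!: mult_carrier_mat mat_unit_carrier mat_adjoint_carrier)
  hence "channel_apply dB Es ?U $$ (r mod dB, c mod dB) =
      (\<Sum>E\<leftarrow>Es. (E * ?U * mat_adjoint E) $$ (r mod dB, c mod dB))"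
    unfolding channel_apply_def using r c by (intro foldr_add_mat(2)) simp_all
  also have "\<dots> = (\<Sum>E\<leftarrow>Es. vecK dA dB E $ r * cnj (vecK dA dB E $ c))"
    using K r c by (intro arg_cong[where f=sum_list] map_cong refl)
      (simp add: index_conj_mat_unit[of _ dB dA] index_vecK)
  finally show ?thesis unfolding choi_def using r c by simp
qed

lemma mtrace_choi_mult:
  assumes K: "\<forall>E\<in>set Es. E \<in> carrier_mat dB dA" and X: "X \<in> carrier_mat (dA*dB) (dA*dB)"
  shows "mtrace (choi dA dB Es * X) = (\<Sum>u\<leftarrow>kraus_vecs dA dB Es. qform (dA*dB) X u)"
proof -
  let ?n = "dA*dB"
  have "mtrace (choi dA dB Es * X) = (\<Sum>i<?n. \<Sum>k<?n. choi dA dB Es $$ (i,k) * X $$ (k,i))"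
    by (rule mtrace_mult[OF _ X]) (simp add: choi_def)
  also have "\<dots> = (\<Sum>i<?n. \<Sum>k<?n. \<Sum>E\<leftarrow>Es. vecK dA dB E $ i * cnj (vecK dA dB E $ k) * X $$ (k,i))"
    using K by (intro sum.cong refl) (simp add: index_choi sum_list_mult_const)
  also have "\<dots> = (\<Sum>E\<leftarrow>Es. \<Sum>i<?n. \<Sum>k<?n. vecK dA dB E $ i * cnj (vecK dA dB E $ k) * X $$ (k,i))"
    by (simp add: sum_sum_list_swap)
  also have "\<dots> = (\<Sum>u\<leftarrow>kraus_vecs dA dB Es. qform ?n X u)"
    unfolding qform_def kraus_vecs_def
    by (simp add: o_def, intro arg_cong[where f=sum_list] map_cong refl, subst sum.swap)
      (simp add: mult_ac)
  finally show ?thesis .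
qed

lemma mtrace_proj_mult:
  assumes H: "hermitian_mat n P" and idem: "P * P = P" and X: "X \<in> carrier_mat n n"
  shows "mtrace (P * X) = (\<Sum>u\<leftarrow>proj_cols n P. qform n X u)"
proof -
  have P: "P \<in> carrier_mat n n" by (rule hermitian_mat_carrier[OF H])
  have P_entry: "P $$ (b,a) = (\<Sum>k<n. P $$ (b,k) * cnj (P $$ (a,k)))" if "b < n" "a < n" for a b
    using index_mult_mat_sum[OF P P that] idem that by (simp add: hermitian_mat_index[OF H])
  have "mtrace (P * X) = (\<Sum>b<n. \<Sum>a<n. \<Sum>k<n. P $$ (b,k) * cnj (P $$ (a,k)) * X $$ (a,b))"
    unfolding mtrace_mult[OF P X]
  proof (intro sum.cong refl)
    fix b a assume "b \<in> {..<n}" "a \<in> {..<n}"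
    thus "P $$ (b,a) * X $$ (a,b) = (\<Sum>k<n. P $$ (b,k) * cnj (P $$ (a,k)) * X $$ (a,b))"
      using P_entry[of b a] by (simp add: sum_distrib_right)
  qed
  also have "\<dots> = (\<Sum>k<n. \<Sum>a<n. \<Sum>b<n. cnj (P $$ (a,k)) * X $$ (a,b) * P $$ (b,k))"
    by (subst sum.swap, subst (2) sum.swap, subst sum.swap) (simp add: mult_ac)
  also have "\<dots> = (\<Sum>u\<leftarrow>proj_cols n P. qform n X u)"
    unfolding qform_def proj_cols_def by (simp add: o_def sum_list_upt_eq_sum_lessThan)
  finally show ?thesis .
qed

lemma tensor_index_bound: "(i::nat) < dA \<Longrightarrow> b < dB \<Longrightarrow> i*dB + b < dA*dB"
proof -
  assume "i < dA" "b < dB"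
  hence "i*dB + b < (i + 1) * dB" by simp
  also have "\<dots> \<le> dA*dB" using \<open>i < dA\<close> by (intro mult_right_mono) auto
  finally show ?thesis .
qed

lemma index_vecK_split: "i < dA \<Longrightarrow> b < dB \<Longrightarrow> vecK dA dB E $ (i*dB + b) = E $$ (b,i)"
  by (simp add: index_vecK tensor_index_bound)

lemma tensor_id_B_carrier: "tensor_id_B dA dB \<rho> \<in> carrier_mat (dA*dB) (dA*dB)"
  unfolding tensor_id_B_def by simp

lemma index_tensor_id_B:
  assumes "i < dA" "i' < dA" "b < dB" "b' < dB"
  shows "tensor_id_B dA dB \<rho> $$ (i*dB + b, i'*dB + b') = (if b = b' then \<rho> $$ (i,i') else 0)"
  using assms tensor_index_bound[of i dA b dB] tensor_index_bound[of i' dA b' dB]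
  unfolding tensor_id_B_def by simp

lemma qform_tensor_id_B:
  "qform (dA*dB) (tensor_id_B dA dB \<rho>) (($) (vecK dA dB E)) =
    (\<Sum>i<dA. \<Sum>i'<dA. \<rho> $$ (i,i') * (\<Sum>b<dB. cnj (E $$ (b,i)) * E $$ (b,i')))"
proof -
  have "qform (dA*dB) (tensor_id_B dA dB \<rho>) (($) (vecK dA dB E)) =
      (\<Sum>i<dA. \<Sum>b<dB. \<Sum>i'<dA. \<Sum>b'<dB.
        if b' = b then cnj (E $$ (b,i)) * \<rho> $$ (i,i') * E $$ (b,i') else 0)"
    unfolding qform_def sum_lessThan_mult_split
    by (intro sum.cong refl) (simp add: index_tensor_id_B index_vecK_split)
  also have "\<dots> = (\<Sum>i<dA. \<Sum>b<dB. \<Sum>i'<dA. cnj (E $$ (b,i)) * \<rho> $$ (i,i') * E $$ (b,i'))"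
    by (intro sum.cong refl) simp
  also have "\<dots> = (\<Sum>i<dA. \<Sum>i'<dA. \<Sum>b<dB. cnj (E $$ (b,i)) * \<rho> $$ (i,i') * E $$ (b,i'))"
    by (rule sum.cong[OF refl], rule sum.swap)
  also have "\<dots> = (\<Sum>i<dA. \<Sum>i'<dA. \<rho> $$ (i,i') * (\<Sum>b<dB. cnj (E $$ (b,i)) * E $$ (b,i')))"
    by (simp add: sum_distrib_left mult_ac)
  finally show ?thesis .
qed

lemma is_kraus_index:
  assumes kr: "is_kraus dA dB Es" and i: "i < dA" and j: "j < dA"
  shows "(\<Sum>E\<leftarrow>Es. \<Sum>b<dB. cnj (E $$ (b,i)) * E $$ (b,j)) = (if i = j then 1 else 0)"
proof -
  have K: "\<forall>E\<in>set Es. E \<in> carrier_mat dB dA"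
    and sum_eq: "foldr (\<lambda>E acc. mat_adjoint E * E + acc) Es (0\<^sub>m dA dA) = 1\<^sub>m dA"
    using kr unfolding is_kraus_def by auto
  have "\<forall>E\<in>set Es. mat_adjoint E * E \<in> carrier_mat dA dA"
    using K by (auto intro!: mult_carrier_mat mat_adjoint_carrier)
  from foldr_add_mat(2)[OF this i j] have "(\<Sum>E\<leftarrow>Es. (mat_adjoint E * E) $$ (i,j)) = 1\<^sub>m dA $$ (i,j)"
    unfolding sum_eq by simp
  moreover have "(mat_adjoint E * E) $$ (i,j) = (\<Sum>b<dB. cnj (E $$ (b,i)) * E $$ (b,j))"
    if "E \<in> set Es" for E
  proof -
    have E: "E \<in> carrier_mat dB dA" using K that by simp
    show ?thesis using index_mult_mat_sum[OF mat_adjoint_carrier[OF E] E i j] E i by simp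
  qed
  ultimately show ?thesis using i j by (simp cong: map_cong)
qed

lemma mtrace_choi_tensor_id_B:
  assumes kr: "is_kraus dA dB Es" and \<rho>: "\<rho> \<in> carrier_mat dA dA"
  shows "mtrace (choi dA dB Es * tensor_id_B dA dB \<rho>) = mtrace \<rho>"
proof -
  have K: "\<forall>E\<in>set Es. E \<in> carrier_mat dB dA" using kr unfolding is_kraus_def by auto
  have "mtrace (choi dA dB Es * tensor_id_B dA dB \<rho>) =
      (\<Sum>E\<leftarrow>Es. \<Sum>i<dA. \<Sum>i'<dA. \<rho> $$ (i,i') * (\<Sum>b<dB. cnj (E $$ (b,i)) * E $$ (b,i')))"
    unfolding mtrace_choi_mult[OF K tensor_id_B_carrier] kraus_vecs_def
    by (simp add: o_def qform_tensor_id_B)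
  also have "\<dots> = (\<Sum>i<dA. \<Sum>i'<dA. \<Sum>E\<leftarrow>Es. \<rho> $$ (i,i') * (\<Sum>b<dB. cnj (E $$ (b,i)) * E $$ (b,i')))"
    by (simp add: sum_sum_list_swap)
  also have "\<dots> = (\<Sum>i<dA. \<Sum>i'<dA. if i = i' then \<rho> $$ (i,i') else 0)"
    by (intro sum.cong refl) (simp add: sum_list_const_mult is_kraus_index[OF kr])
  finally show ?thesis unfolding mtrace_def using \<rho> by simp
qed

lemma vecK_kraus_space_lin_comb:
  assumes "\<forall>E\<in>set Es. E \<in> carrier_mat dB dA" and "M \<in> kraus_space dA dB Es"
  shows "\<exists>cs. \<forall>r<dA*dB. vecK dA dB M $ r = lin_comb cs (kraus_vecs dA dB Es) r"
  using assms
proof (induction Es arbitrary: M)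
  case Nil
  thus ?case by (auto simp: kraus_space_Nil vecK_zero kraus_vecs_def)
next
  case (Cons F Es)
  then obtain c M' where M: "M = c \<cdot>\<^sub>m F + M'" and M': "M' \<in> kraus_space dA dB Es"
    by (auto simp: kraus_space_Cons)
  then obtain cs where "\<forall>r<dA*dB. vecK dA dB M' $ r = lin_comb cs (kraus_vecs dA dB Es) r"
    using Cons.IH[of M'] Cons.prems by auto
  hence "\<forall>r<dA*dB. vecK dA dB M $ r = lin_comb (c # cs) (kraus_vecs dA dB (F # Es)) r"
    using Cons.prems kraus_space_carrier[of Es dB dA M'] M'
    unfolding M by (simp add: vecK_lincomb kraus_vecs_def)
  thus ?case by blast
qed

lemma proj_col_mem:
  assumes "is_proj_onto n S P" and "k < n"
  shows "\<exists>x\<in>S. \<forall>r<n. P $$ (r,k) = x $ r"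
proof -
  have "P \<in> carrier_mat n n" and "P *\<^sub>v unit_vec n k \<in> S"
    using assms unfolding is_proj_onto_def hermitian_mat_def by auto
  thus ?thesis using assms(2) by (intro bexI[of _ "P *\<^sub>v unit_vec n k"]) auto
qed

lemma lin_comb_proj_cols:
  assumes P: "is_proj_onto n S P" and x: "x \<in> S" and r: "r < n"
  shows "x $ r = lin_comb (map (($) x) [0..<n]) (proj_cols n P) r"
proof -
  have P_carrier: "P \<in> carrier_mat n n" and "x \<in> carrier_vec n"
    using P x unfolding is_proj_onto_def hermitian_mat_def by auto
  hence "x $ r = (\<Sum>k<n. P $$ (r,k) * x $ k)"
    using is_proj_onto_fixes[OF P x] index_mult_mat_vec_sum[OF P_carrier _ r] by metis
  thus ?thesis unfolding proj_cols_def lin_comb_map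
    by (simp add: sum_list_upt_eq_sum_lessThan mult.commute)
qed

lemma choi_supp_proj_comparable:
  assumes kr: "is_kraus dA dB Es"
  defines "P \<equiv> supp_proj_K dA dB (kraus_space dA dB Es)"
  shows "\<exists>C\<ge>0. \<forall>X. psd (dA*dB) X \<longrightarrow>
           Re (mtrace (P * X)) \<le> C * Re (mtrace (choi dA dB Es * X))"
    and "\<exists>C\<ge>0. \<forall>X. psd (dA*dB) X \<longrightarrow>
           Re (mtrace (choi dA dB Es * X)) \<le> C * Re (mtrace (P * X))"
proof -
  let ?n = "dA*dB"
  let ?S = "vecK dA dB ` kraus_space dA dB Es"
  have K: "\<forall>E\<in>set Es. E \<in> carrier_mat dB dA" using kr unfolding is_kraus_def by auto
  have PS: "is_proj_onto ?n ?S P" unfolding P_def by (rule supp_proj_K_is_proj_onto[OF K])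
  have H: "hermitian_mat ?n P" and idem: "P * P = P" using PS unfolding is_proj_onto_def by auto
  have trJ: "Re (mtrace (choi dA dB Es * X)) = (\<Sum>u\<leftarrow>kraus_vecs dA dB Es. Re (qform ?n X u))"
    if "psd ?n X" for X
    using mtrace_choi_mult[OF K psd_carrier[OF that]] by (simp add: Re_sum_list)
  have trP: "Re (mtrace (P * X)) = (\<Sum>u\<leftarrow>proj_cols ?n P. Re (qform ?n X u))"
    if "psd ?n X" for X
    using mtrace_proj_mult[OF H idem psd_carrier[OF that]] by (simp add: Re_sum_list)
  have "\<forall>u\<in>set (proj_cols ?n P). \<exists>cs. \<forall>r<?n. u r = lin_comb cs (kraus_vecs dA dB Es) r"
  proof
    fix u assume "u \<in> set (proj_cols ?n P)"
    then obtain k where k: "k < ?n" and u: "u = (\<lambda>a. P $$ (a,k))" unfolding proj_cols_def by auto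
    obtain M where "M \<in> kraus_space dA dB Es" and "\<forall>r<?n. P $$ (r,k) = vecK dA dB M $ r"
      using proj_col_mem[OF PS k] by auto
    thus "\<exists>cs. \<forall>r<?n. u r = lin_comb cs (kraus_vecs dA dB Es) r"
      using vecK_kraus_space_lin_comb[OF K] unfolding u by metis
  qed
  from sum_qform_le_if_lin_combs[OF this] show "\<exists>C\<ge>0. \<forall>X. psd ?n X \<longrightarrow>
      Re (mtrace (P * X)) \<le> C * Re (mtrace (choi dA dB Es * X))"
    by (simp add: trJ trP)
  have "\<forall>u\<in>set (kraus_vecs dA dB Es). \<exists>cs. \<forall>r<?n. u r = lin_comb cs (proj_cols ?n P) r"
  proof
    fix u assume "u \<in> set (kraus_vecs dA dB Es)"
    then obtain E where "E \<in> set Es" and u: "u = ($) (vecK dA dB E)" unfolding kraus_vecs_def by auto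
    hence "vecK dA dB E \<in> ?S" using kraus_op_mem_kraus_space[OF K] by blast
    thus "\<exists>cs. \<forall>r<?n. u r = lin_comb cs (proj_cols ?n P) r"
      using lin_comb_proj_cols[OF PS] unfolding u by blast
  qed
  from sum_qform_le_if_lin_combs[OF this] show "\<exists>C\<ge>0. \<forall>X. psd ?n X \<longrightarrow>
      Re (mtrace (choi dA dB Es * X)) \<le> C * Re (mtrace (P * X))"
    by (simp add: trJ trP)
qed

lemma mtrace_choi_mult_nonneg:
  "\<forall>E\<in>set Es. E \<in> carrier_mat dB dA \<Longrightarrow> psd (dA*dB) X \<Longrightarrow> 0 \<le> Re (mtrace (choi dA dB Es * X))"
  by (simp add: mtrace_choi_mult psd_carrier Re_sum_list) (auto intro!: sum_list_nonneg qform_nonneg)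

lemma mtrace_proj_mult_nonneg:
  "hermitian_mat n P \<Longrightarrow> P * P = P \<Longrightarrow> psd n X \<Longrightarrow> 0 \<le> Re (mtrace (P * X))"
  by (simp add: mtrace_proj_mult psd_carrier Re_sum_list) (auto intro!: sum_list_nonneg qform_nonneg)

section \<open>Optimal values\<close>

lemma SUP_diff_eq_iff:
  fixes h :: "'p \<Rightarrow> real"
  assumes h0: "\<forall>p\<in>S. 0 \<le> h p"
  shows "(SUP p\<in>S. ereal (a - h p)) = ereal a \<longleftrightarrow> (\<forall>e>0. \<exists>p\<in>S. h p < e)"
proof
  assume eq: "(SUP p\<in>S. ereal (a - h p)) = ereal a"
  show "\<forall>e>0. \<exists>p\<in>S. h p < e"
  proof (rule ccontr)
    assume "\<not> (\<forall>e>0. \<exists>p\<in>S. h p < e)"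
    then obtain e where e: "e > 0" "\<forall>p\<in>S. e \<le> h p" by (auto simp: not_less)
    have "(SUP p\<in>S. ereal (a - h p)) \<le> ereal (a - e)"
      using e by (intro SUP_least) auto
    thus False using eq e by simp
  qed
next
  assume small: "\<forall>e>0. \<exists>p\<in>S. h p < e"
  show "(SUP p\<in>S. ereal (a - h p)) = ereal a"
  proof (rule antisym)
    show "(SUP p\<in>S. ereal (a - h p)) \<le> ereal a" using h0 by (intro SUP_least) auto
    show "ereal a \<le> (SUP p\<in>S. ereal (a - h p))"
    proof (rule ereal_le_epsilon2)
      fix e :: real assume "0 < e"
      then obtain p where p: "p \<in> S" "h p < e" using small by auto
      have "ereal a \<le> ereal (a - h p) + ereal e" using p by simp
      also have "\<dots> \<le> (SUP p\<in>S. ereal (a - h p)) + ereal e"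
        using p by (intro add_right_mono SUP_upper)
      finally show "ereal a \<le> (SUP p\<in>S. ereal (a - h p)) + ereal e" .
    qed
  qed
qed

lemma arbitrarily_small_if_dominated:
  fixes f g :: "'p \<Rightarrow> real"
  assumes f0: "\<forall>p\<in>S. 0 \<le> f p" and C: "C \<ge> 0" and gf: "\<forall>p\<in>S. g p \<le> C * f p"
    and small: "\<forall>e>0. \<exists>p\<in>S. f p < e"
  shows "\<forall>e>0. \<exists>p\<in>S. g p < e"
proof (intro allI impI)
  fix e :: real assume e: "e > 0"
  hence "e / (C + 1) > 0" using C by simp
  then obtain p where p: "p \<in> S" "f p < e / (C + 1)" using small by blast
  have "g p \<le> (C + 1) * f p" using gf f0 p by (simp add: distrib_right add_increasing2)
  also have "\<dots> < (C + 1) * (e / (C + 1))" using p C by (intro mult_strict_left_mono) auto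
  also have "\<dots> = e" using C by simp
  finally show "\<exists>p\<in>S. g p < e" using p by blast
qed

lemma feasibleD:
  assumes "(W, \<rho>) \<in> feasible \<Omega> dA dB k"
  shows "W \<in> carrier_mat (dA*dB) (dA*dB)" "\<rho> \<in> carrier_mat dA dA"
    "psd (dA*dB) (tensor_id_B dA dB \<rho> - W)" "mtrace \<rho> = 1"
  using assms unfolding feasible_def loewner_le_def by auto

lemma F_val_eq_1_iff_D_val_eq_0:
  assumes kr: "is_kraus dA dB Es"
  shows "F_val \<Omega> dA dB Es k = 1 \<longleftrightarrow> D_val \<Omega> dA dB (kraus_space dA dB Es) k = 0"
proof -
  let ?n = "dA*dB" and ?J = "choi dA dB Es" and ?S = "feasible \<Omega> dA dB k"
  let ?P = "supp_proj_K dA dB (kraus_space dA dB Es)"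
  define X where "X p = tensor_id_B dA dB (snd p) - fst p" for p :: "complex mat \<times> complex mat"
  define f where "f p = Re (mtrace (?J * X p))" for p
  define g where "g p = Re (mtrace (?P * X p))" for p
  have K: "\<forall>E\<in>set Es. E \<in> carrier_mat dB dA" using kr unfolding is_kraus_def by auto
  have PS: "is_proj_onto ?n (vecK dA dB ` kraus_space dA dB Es) ?P"
    by (rule supp_proj_K_is_proj_onto[OF K])
  hence H: "hermitian_mat ?n ?P" and idem: "?P * ?P = ?P" unfolding is_proj_onto_def by auto
  have J: "?J \<in> carrier_mat ?n ?n" unfolding choi_def by simp
  have X: "psd ?n (X p)" if "p \<in> ?S" for p
    using feasibleD that unfolding X_def by (metis prod.collapse)
  have "Re (mtrace (?J * fst p)) = 1 - f p" and "Re (mtrace (?P * (fst p - tensor_id_B dA dB (snd p)))) = 0 - g p"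
    if "p \<in> ?S" for p
  proof -
    obtain W \<rho> where p: "p = (W, \<rho>)" by fastforce
    note feas = feasibleD[OF that[unfolded p]]
    show "Re (mtrace (?J * fst p)) = 1 - f p"
      unfolding f_def X_def p using feas
      by (simp add: mtrace_mult_minus[OF J tensor_id_B_carrier] mtrace_choi_tensor_id_B[OF kr])
    show "Re (mtrace (?P * (fst p - tensor_id_B dA dB (snd p)))) = 0 - g p"
      unfolding g_def X_def p using feas hermitian_mat_carrier[OF H]
      by (simp add: mtrace_mult_minus[of _ ?n] tensor_id_B_carrier)
  qed
  hence Fval: "F_val \<Omega> dA dB Es k = (SUP p\<in>?S. ereal (1 - f p))"
    and Dval: "D_val \<Omega> dA dB (kraus_space dA dB Es) k = (SUP p\<in>?S. ereal (0 - g p))"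
    unfolding F_val_def D_val_def by (auto intro!: SUP_cong)
  have f0: "\<forall>p\<in>?S. 0 \<le> f p" and g0: "\<forall>p\<in>?S. 0 \<le> g p"
    unfolding f_def g_def using X mtrace_choi_mult_nonneg[OF K] mtrace_proj_mult_nonneg[OF H idem]
    by auto
  moreover obtain C1 where "C1 \<ge> 0" "\<forall>p\<in>?S. g p \<le> C1 * f p"
    using choi_supp_proj_comparable(1)[OF kr] X unfolding f_def g_def by metis
  moreover obtain C2 where "C2 \<ge> 0" "\<forall>p\<in>?S. f p \<le> C2 * g p"
    using choi_supp_proj_comparable(2)[OF kr] X unfolding f_def g_def by metis
  ultimately have "(\<forall>e>0. \<exists>p\<in>?S. f p < e) \<longleftrightarrow> (\<forall>e>0. \<exists>p\<in>?S. g p < e)"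
    using arbitrarily_small_if_dominated[of ?S f C1 g] arbitrarily_small_if_dominated[of ?S g C2 f]
    by blast
  thus ?thesis
    unfolding Fval Dval one_ereal_def zero_ereal_def SUP_diff_eq_iff[OF f0] SUP_diff_eq_iff[OF g0] .
qed

theorem theorem1:
  fixes \<Omega> :: Omega and dA dB :: nat and Es :: "complex mat list"
  assumes "is_kraus dA dB Es"
  shows "(\<forall>k::real. k > 0 \<longrightarrow>
           (F_val \<Omega> dA dB Es k = 1 \<longleftrightarrow> D_val \<Omega> dA dB (kraus_space dA dB Es) k = 0)) \<and>
         Q0_N \<Omega> dA dB Es = Q0_K \<Omega> dA dB (kraus_space dA dB Es) \<and>
         Q0_K \<Omega> dA dB (kraus_space dA dB Es) = \<lfloor>kappa_K \<Omega> dA dB (kraus_space dA dB Es)\<rfloor>"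
proof (intro conjI)
  show "\<forall>k::real. k > 0 \<longrightarrow>
          (F_val \<Omega> dA dB Es k = 1 \<longleftrightarrow> D_val \<Omega> dA dB (kraus_space dA dB Es) k = 0)"
    using F_val_eq_1_iff_D_val_eq_0[OF assms] by blast
  show "Q0_N \<Omega> dA dB Es = Q0_K \<Omega> dA dB (kraus_space dA dB Es)"
    unfolding Q0_N_def Q0_K_def kappa_N_def kappa_K_def F_val_eq_1_iff_D_val_eq_0[OF assms] ..
  show "Q0_K \<Omega> dA dB (kraus_space dA dB Es) = \<lfloor>kappa_K \<Omega> dA dB (kraus_space dA dB Es)\<rfloor>"
    unfolding Q0_K_def ..
qed

end
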